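(* Let $\theta_t f(x)=\int k_t(x,y)f(y)\,\mathrm{d}y$, $t>0$, be integral operators whose kernels satisfy, for constants $C>0$, $\alpha\in(0,1]$ and all $x,y,x',y'\in\mathbb{R}^d$, $t>0$: $|k_t(x,y)|\le C\,t^\alpha(t+|x-y|)^{-\alpha-d}$ and $|k_t(x,y)-k_t(x',y')|\le C(|x-x'|^\alpha+|y-y'|^\alpha)(t+|x-y|)^{-\alpha-d}$ whenever $|x-x'|+|y-y'|<t$. Let $\mathcal{D}$ be a dyadic grid, $r\in\mathbb{N}$, and let $P,R\in\mathcal{D}$ with $R$ $r$-good. Suppose that either (1) $\ell P\ge\ell R$ and $P,R$ are disjoint, or (2) $\ell P<\ell R$. Then for every locally integrable $f$ and every $(x,t)\in W_R:=R\times[\ell R/2,\ell R)$, \[ |\theta_t(\Delta_Pf)(x)|\lesssim\frac{(\sqrt{\ell R\,\ell P})^\alpha}{D(R,P)^{\alpha+d}}\|\Delta_Pf\|_{L^1}, \] where the implicit constant depends only on $C,\alpha,d,r$.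
   Context: $\mathbb{R}^d$ carries the $\ell^\infty$ metric $|x|=\max_i|x_i|$; $\operatorname{d}(P,R)$ is the distance between sets and $D(P,R)=\ell P+\operatorname{d}(P,R)+\ell R$. A dyadic grid is either the standard grid $\mathcal{D}^0=\bigcup_j\{2^{-j}([0,1)^d+m):m\in\mathbb{Z}^d\}$ or a translate $\mathcal{D}^\omega=\{R+\sum_{i>j}\omega_i2^{-i}: R\in\mathcal{D}^0,\ \ell R=2^{-j}\}$ for $\omega=(\omega_i)_{i\in\mathbb{Z}}\in(\{0,1\}^d)^{\mathbb{Z}}$. For $P\in\mathcal{D}$, $\Delta_Pf=\sum_{J}(\langle f\rangle_J-\langle f\rangle_P)\mathbf{1}_J$, the sum over the $2^d$ dyadic children $J$ of $P$, with $\langle f\rangle_Q=|Q|^{-1}\int_Qf$. Fix $\gamma=\alpha/(4\alpha+4d)$. A cube $R\in\mathcal{D}$ is $r$-good if $\operatorname{d}(R,\partial P)>(\ell R)^\gamma(\ell P)^{1-\gamma}$ for every $P\in\mathcal{D}$ with $\ell P\ge 2^r\ell R$. *)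

theory Defs
  imports "HOL-Analysis.Analysis"
begin

definition linf :: "real ^ 'n \<Rightarrow> real" where
  "linf x = Max (range (\<lambda>i. \<bar>x $ i\<bar>))"

definition setdist_inf :: "(real ^ 'n) set \<Rightarrow> (real ^ 'n) set \<Rightarrow> real" where
  "setdist_inf A B = Inf {linf (x - y) | x y. x \<in> A \<and> y \<in> B}"

text \<open>Translation vector sum_{i>j} omega_i 2^{-i} for the grid D^omega
  (omega :: int => 'n => bool encodes an element of ({0,1}^d)^Z;
   omega = (\<lambda>_ _. False) gives the standard grid D^0).\<close>
definition grid_shift :: "(int \<Rightarrow> 'n \<Rightarrow> bool) \<Rightarrow> int \<Rightarrow> real ^ 'n" where
  "grid_shift \<omega> j = (\<Sum>k. (2 powr (- (real_of_int j + 1 + real k))) *\<^sub>R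
                         (\<chi> i. if \<omega> (j + 1 + int k) i then 1 else 0))"

definition dcube :: "(int \<Rightarrow> 'n \<Rightarrow> bool) \<Rightarrow> int \<Rightarrow> int ^ 'n \<Rightarrow> (real ^ 'n) set" where
  "dcube \<omega> j m = {x. \<forall>i. 2 powr (- real_of_int j) * real_of_int (m $ i) + grid_shift \<omega> j $ i \<le> x $ i
                       \<and> x $ i < 2 powr (- real_of_int j) * (real_of_int (m $ i) + 1) + grid_shift \<omega> j $ i}"

definition dchildren :: "(int \<Rightarrow> 'n \<Rightarrow> bool) \<Rightarrow> int \<Rightarrow> int ^ 'n \<Rightarrow> (real ^ 'n) set set" where
  "dchildren \<omega> j m = {dcube \<omega> (j + 1) m' | m'. dcube \<omega> (j + 1) m' \<subseteq> dcube \<omega> j m}"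

definition avg :: "(real ^ 'n) set \<Rightarrow> (real ^ 'n \<Rightarrow> real) \<Rightarrow> real" where
  "avg Q f = integral Q f / measure lebesgue Q"

definition mdiff :: "(int \<Rightarrow> 'n \<Rightarrow> bool) \<Rightarrow> int \<Rightarrow> int ^ 'n \<Rightarrow> (real ^ 'n \<Rightarrow> real) \<Rightarrow> real ^ 'n \<Rightarrow> real" where
  "mdiff \<omega> j m f y = (\<Sum>J\<in>dchildren \<omega> j m. (avg J f - avg (dcube \<omega> j m) f) * indicator J y)"

definition good :: "real \<Rightarrow> nat \<Rightarrow> (int \<Rightarrow> 'n \<Rightarrow> bool) \<Rightarrow> int \<Rightarrow> int ^ 'n \<Rightarrow> bool" where
  "good \<alpha> r \<omega> jR mR \<longleftrightarrow>
     (\<forall>j m. 2 powr (- real_of_int j) \<ge> 2 ^ r * 2 powr (- real_of_int jR) \<longrightarrow>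
        setdist_inf (dcube \<omega> jR mR) (frontier (dcube \<omega> j m))
          > (2 powr (- real_of_int jR)) powr (\<alpha> / (4 * \<alpha> + 4 * CARD('n)))
            * (2 powr (- real_of_int j)) powr (1 - \<alpha> / (4 * \<alpha> + 4 * CARD('n))))"

end

(* Let lR, lP be the side lengths of R and P, delta = d(R,P) and N = alpha + d. For x in R,
   y in P and t >= lR/2 one has t + |x - y| >= lR/2 + delta.
   If lP < lR, then lP <= lR/2 and Delta_P f has mean zero, so k_t(x,y) may be replaced by
   k_t(x,y) - k_t(x,c) for a corner c of P; the Hoelder condition bounds this by
   C lP^alpha (lR/2 + delta)^(-N), and D(R,P) <= 4 (lR/2 + delta).
   If lP >= lR and P is disjoint from R, the size condition gives C lR^alpha (lR/2 + delta)^(-N).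
   This suffices when lP < 2^r lR or delta >= lP, since then D(R,P) <= 4 2^r (lR/2 + delta).
   Otherwise r-goodness of R gives delta >= d(R, boundary of P) > lR^gamma lP^(1-gamma), and
   gamma N = alpha/4 turns lR^alpha delta^(-N) into (lR lP)^(alpha/2) lP^(-N), while
   D(R,P) <= 3 lP. Integrating the pointwise bound against |Delta_P f| gives the estimate. *)

theory Submission
  imports Defs
begin

lemma component_le_linf: "\<bar>v $ i\<bar> \<le> linf v"
  unfolding linf_def by (rule Max_ge) auto

lemma linf_le: "(\<And>i. \<bar>v $ i\<bar> \<le> B) \<Longrightarrow> linf v \<le> B"
  unfolding linf_def by (rule Max.boundedI) auto

lemma linf_less: "(\<And>i. \<bar>v $ i\<bar> < B) \<Longrightarrow> linf v < B"
  unfolding linf_def by (subst Max_less_iff) auto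

lemma linf_nonneg: "0 \<le> linf v"
  using component_le_linf abs_ge_zero order_trans by blast

lemma linf_zero [simp]: "linf 0 = 0"
  by (intro antisym linf_le linf_nonneg) simp

lemma summable_grid_shift:
  "summable (\<lambda>k. (2 powr (- (real_of_int j + 1 + real k))) *\<^sub>R
     ((\<chi> i. if \<omega> (j + 1 + int k) i then 1 else 0) :: real ^ 'n))"
proof (rule summable_comparison_test')
  show "summable (\<lambda>k. real CARD('n) * 2 powr (- (real_of_int j + 1)) * (1 / 2) ^ k)"
    by (intro summable_mult summable_geometric) simp
next
  fix k :: nat
  let ?v = "(\<chi> i. if \<omega> (j + 1 + int k) i then 1 else 0) :: real ^ 'n"
  have "norm ?v \<le> (\<Sum>i\<in>UNIV. \<bar>?v $ i\<bar>)"
    by (rule norm_le_l1_cart)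
  also have "\<dots> \<le> real CARD('n)"
    using sum_bounded_above[of UNIV "\<lambda>i. \<bar>?v $ i\<bar>" 1] by simp
  finally have "norm ?v \<le> real CARD('n)" .
  moreover have "(2::real) powr (- (real_of_int j + 1 + real k))
      = 2 powr (- (real_of_int j + 1)) * (1 / 2) ^ k"
    by (simp add: powr_diff powr_realpow power_one_over)
  ultimately show "norm ((2 powr (- (real_of_int j + 1 + real k))) *\<^sub>R ?v)
      \<le> real CARD('n) * 2 powr (- (real_of_int j + 1)) * (1 / 2) ^ k"
    by (simp add: mult_left_mono mult.commute mult.left_commute)
qed

lemma grid_shift_succ:
  fixes \<omega> :: "int \<Rightarrow> 'n::finite \<Rightarrow> bool"
  shows "grid_shift \<omega> j = (2 powr (- real_of_int j) / 2) *\<^sub>R (\<chi> i. if \<omega> (j + 1) i then 1 else 0)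
     + grid_shift \<omega> (j + 1)"
proof -
  define F where "F k = (2 powr (- (real_of_int j + 1 + real k))) *\<^sub>R
     ((\<chi> i. if \<omega> (j + 1 + int k) i then 1 else 0) :: real ^ 'n)" for k
  have "grid_shift \<omega> (j + 1) = (\<Sum>k. F (Suc k))"
    unfolding grid_shift_def F_def by (simp add: add_ac)
  also have "\<dots> = grid_shift \<omega> j - F 0"
    unfolding grid_shift_def F_def by (rule suminf_split_head[OF summable_grid_shift])
  finally show ?thesis
    by (simp add: F_def powr_diff)
qed

text \<open>Cube membership is a floor condition on the coordinates, which turns the parent-child
  relation of the grid into integer division by 2.\<close>

definition dindex :: "(int \<Rightarrow> 'n \<Rightarrow> bool) \<Rightarrow> int \<Rightarrow> real ^ 'n \<Rightarrow> int ^ 'n" where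
  "dindex \<omega> j x = (\<chi> i. \<lfloor>(x $ i - grid_shift \<omega> j $ i) / 2 powr (- real_of_int j)\<rfloor>)"

definition dparent :: "(int \<Rightarrow> 'n \<Rightarrow> bool) \<Rightarrow> int \<Rightarrow> int ^ 'n \<Rightarrow> int ^ 'n" where
  "dparent \<omega> j m = (\<chi> i. (m $ i - (if \<omega> (j + 1) i then 1 else 0)) div 2)"

definition dcorner :: "(int \<Rightarrow> 'n \<Rightarrow> bool) \<Rightarrow> int \<Rightarrow> int ^ 'n \<Rightarrow> real ^ 'n" where
  "dcorner \<omega> j m = (\<chi> i. 2 powr (- real_of_int j) * real_of_int (m $ i) + grid_shift \<omega> j $ i)"

lemma mem_dcube_iff_dindex: "x \<in> dcube \<omega> j m \<longleftrightarrow> dindex \<omega> j x = m"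
  unfolding dcube_def dindex_def vec_eq_iff
  by (simp add: floor_eq_iff pos_le_divide_eq pos_divide_less_eq algebra_simps)

lemma dcube_disjoint: "m \<noteq> m' \<Longrightarrow> dcube \<omega> j m \<inter> dcube \<omega> j m' = {}"
  by (auto simp: mem_dcube_iff_dindex)

lemma dindex_eq_dparent: "dindex \<omega> j x = dparent \<omega> j (dindex \<omega> (j + 1) x)"
proof -
  have "\<lfloor>(x $ i - grid_shift \<omega> j $ i) / 2 powr (- real_of_int j)\<rfloor>
      = (\<lfloor>(x $ i - grid_shift \<omega> (j + 1) $ i) / 2 powr (- real_of_int (j + 1))\<rfloor> - e) div 2"
    if e: "e = (if \<omega> (j + 1) i then 1 else 0)" for i e
  proof -
    let ?u = "(x $ i - grid_shift \<omega> (j + 1) $ i) / 2 powr (- real_of_int (j + 1))"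
    have "(x $ i - grid_shift \<omega> j $ i) / 2 powr (- real_of_int j)
        = (?u - real_of_int e) / real_of_int 2"
      using e by (subst grid_shift_succ) (simp add: powr_diff powr_minus field_simps)
    also have "\<lfloor>\<dots>\<rfloor> = \<lfloor>?u - real_of_int e\<rfloor> div 2"
      by (rule floor_divide_real_eq_div) simp
    finally show ?thesis by simp
  qed
  then show ?thesis
    unfolding dindex_def dparent_def by (simp add: vec_eq_iff)
qed

lemma dcorner_mem_dcube: "dcorner \<omega> j m \<in> dcube \<omega> j m"
  unfolding dcube_def dcorner_def by (simp add: algebra_simps)

lemma linf_diff_dcorner_less:
  "y \<in> dcube \<omega> j m \<Longrightarrow> linf (y - dcorner \<omega> j m) < 2 powr (- real_of_int j)"
  unfolding dcube_def dcorner_def by (intro linf_less) (auto simp: algebra_simps)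

lemma dcube_subset_cbox:
  "dcube \<omega> j m \<subseteq> cbox (dcorner \<omega> j m) (dcorner \<omega> j m + (\<chi> i. 2 powr (- real_of_int j)))"
  unfolding dcube_def dcorner_def interval_cart by (fastforce simp: algebra_simps intro: less_imp_le)

lemma lmeasurable_dcube: "dcube \<omega> j m \<in> lmeasurable"
proof (rule bounded_set_imp_lmeasurable)
  show "bounded (dcube \<omega> j m)"
    using bounded_cbox dcube_subset_cbox by (rule bounded_subset)
  have "dcube \<omega> j m \<in> sets borel"
    unfolding dcube_def by measurable
  then show "dcube \<omega> j m \<in> sets lebesgue"
    by simp
qed

lemma dcube_succ_subset_iff: "dcube \<omega> (j + 1) m' \<subseteq> dcube \<omega> j m \<longleftrightarrow> dparent \<omega> j m' = m"
proof
  assume "dcube \<omega> (j + 1) m' \<subseteq> dcube \<omega> j m"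
  then have "dcorner \<omega> (j + 1) m' \<in> dcube \<omega> j m"
    using dcorner_mem_dcube by blast
  then show "dparent \<omega> j m' = m"
    using dcorner_mem_dcube[of \<omega> "j + 1" m']
    by (simp add: mem_dcube_iff_dindex dindex_eq_dparent[of \<omega> j])
qed (auto simp: mem_dcube_iff_dindex dindex_eq_dparent[of \<omega> j])

lemma dchildren_eq_image: "dchildren \<omega> j m = dcube \<omega> (j + 1) ` {m'. dparent \<omega> j m' = m}"
  unfolding dchildren_def dcube_succ_subset_iff by auto

lemma finite_dparent_fibre: "finite {m'. dparent \<omega> j m' = m}"
proof (rule finite_subset)
  let ?e = "\<lambda>i. if \<omega> (j + 1) i then 1 else 0 :: int"
  show "{m'. dparent \<omega> j m' = m} \<subseteq> range (\<lambda>v. \<chi> i. 2 * m $ i + ?e i + (if v i then 1 else 0))"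
  proof
    fix m' assume "m' \<in> {m'. dparent \<omega> j m' = m}"
    then have fibre: "(m' $ i - ?e i) div 2 = m $ i" for i
      by (auto simp: dparent_def)
    have div2_cases: "(a - e) div 2 = b \<Longrightarrow> a = 2 * b + e + (if a \<noteq> 2 * b + e then 1 else 0)"
      for a b e :: int
      by presburger
    have "m' $ i = 2 * m $ i + ?e i + (if m' $ i \<noteq> 2 * m $ i + ?e i then 1 else 0)" for i
      using fibre[of i] by (rule div2_cases)
    then show "m' \<in> range (\<lambda>v. \<chi> i. 2 * m $ i + ?e i + (if v i then 1 else 0))"
      by (intro range_eqI[of _ _ "\<lambda>i. m' $ i \<noteq> 2 * m $ i + ?e i"]) (simp add: vec_eq_iff)
  qed
qed simp

lemma finite_dchildren: "finite (dchildren \<omega> j m)"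
  unfolding dchildren_eq_image using finite_dparent_fibre by blast

lemma lmeasurable_dchildren: "J \<in> dchildren \<omega> j m \<Longrightarrow> J \<in> lmeasurable"
  unfolding dchildren_eq_image using lmeasurable_dcube by blast

lemma disjoint_dchildren: "disjoint (dchildren \<omega> j m)"
proof (rule disjointI)
  fix A B assume "A \<in> dchildren \<omega> j m" "B \<in> dchildren \<omega> j m" "A \<noteq> B"
  then obtain m1 m2 where "A = dcube \<omega> (j + 1) m1" "B = dcube \<omega> (j + 1) m2" "m1 \<noteq> m2"
    unfolding dchildren_eq_image by auto
  then show "A \<inter> B = {}"
    by (simp add: dcube_disjoint)
qed

lemma Union_dchildren: "\<Union>(dchildren \<omega> j m) = dcube \<omega> j m"
proof
  show "\<Union>(dchildren \<omega> j m) \<subseteq> dcube \<omega> j m"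
    unfolding dchildren_def by blast
  show "dcube \<omega> j m \<subseteq> \<Union>(dchildren \<omega> j m)"
  proof
    fix x assume "x \<in> dcube \<omega> j m"
    then have "dparent \<omega> j (dindex \<omega> (j + 1) x) = m"
      by (simp add: mem_dcube_iff_dindex dindex_eq_dparent[of \<omega> j])
    moreover have "x \<in> dcube \<omega> (j + 1) (dindex \<omega> (j + 1) x)"
      by (simp add: mem_dcube_iff_dindex)
    ultimately show "x \<in> \<Union>(dchildren \<omega> j m)"
      unfolding dchildren_eq_image by blast
  qed
qed

lemma avg_mult_measure: "S \<in> lmeasurable \<Longrightarrow> avg S f * measure lebesgue S = integral S f"
proof (cases "measure lebesgue S = 0")
  case True
  moreover assume "S \<in> lmeasurable"
  ultimately have "negligible S"
    using negligible_iff_measure0 by blast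
  then show ?thesis
    using True by (simp add: integral_negligible)
qed (simp add: avg_def)

lemma integral_avg_diff_partition_eq_0:
  fixes f :: "real ^ 'n \<Rightarrow> real"
  assumes fin: "finite \<J>" and meas: "\<And>J. J \<in> \<J> \<Longrightarrow> J \<in> lmeasurable" and disj: "disjoint \<J>"
    and f: "f absolutely_integrable_on \<Union>\<J>"
  shows "integral UNIV (\<lambda>y. \<Sum>J\<in>\<J>. (avg J f - avg (\<Union>\<J>) f) * indicator J y) = 0"
proof -
  let ?a = "avg (\<Union>\<J>) f"
  have f_J: "(f has_integral integral J f) J" if "J \<in> \<J>" for J
    using set_integrable_subset[OF f fmeasurableD[OF meas[OF that]]] that
    by (auto simp: absolutely_integrable_on_def)
  have "integral UNIV (\<lambda>y. \<Sum>J\<in>\<J>. (avg J f - ?a) * indicator J y)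
      = (\<Sum>J\<in>\<J>. (avg J f - ?a) * measure lebesgue J)"
    using meas by (subst integral_sum[OF fin])
      (auto simp: lmeasure_integral_UNIV integrable_on_indicator intro: integrable_on_mult_right)
  also have "\<dots> = (\<Sum>J\<in>\<J>. integral J f) - ?a * (\<Sum>J\<in>\<J>. measure lebesgue J)"
    using meas by (simp add: left_diff_distrib avg_mult_measure sum_subtractf sum_distrib_left)
  also have "(\<Sum>J\<in>\<J>. integral J f) = integral (\<Union>\<J>) f"
  proof (rule integral_unique[symmetric], rule has_integral_Union[OF fin f_J])
    show "pairwise (\<lambda>S S'. negligible (S \<inter> S')) \<J>"
      by (rule pairwise_mono[OF disj _ order_refl]) (simp add: disjnt_def)
  qed
  also have "(\<Sum>J\<in>\<J>. measure lebesgue J) = measure lebesgue (\<Union>\<J>)"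
    by (rule measure_Union'[OF fin meas disj, symmetric])
  also have "integral (\<Union>\<J>) f - ?a * measure lebesgue (\<Union>\<J>) = 0"
    using avg_mult_measure[OF fmeasurable.finite_Union[OF fin], of f] meas by (simp add: subset_iff)
  finally show ?thesis .
qed

lemma mdiff_eq_0_outside: "y \<notin> dcube \<omega> j m \<Longrightarrow> mdiff \<omega> j m f y = 0"
  unfolding mdiff_def using Union_dchildren[of \<omega> j m] by (intro sum.neutral) auto

lemma absolutely_integrable_mdiff: "mdiff \<omega> j m f absolutely_integrable_on UNIV"
  unfolding mdiff_def
proof (intro absolutely_integrable_sum[OF finite_dchildren])
  fix J assume "J \<in> dchildren \<omega> j m"
  then have "indicat_real J absolutely_integrable_on UNIV"
    using lmeasurable_dchildren
    by (intro nonnegative_absolutely_integrable_1) (auto simp: integrable_on_indicator)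
  from absolutely_integrable_scaleR_left[OF this, of "avg J f - avg (dcube \<omega> j m) f"]
  show "(\<lambda>y. (avg J f - avg (dcube \<omega> j m) f) * indicat_real J y) absolutely_integrable_on UNIV"
    by simp
qed

lemma integral_mdiff_eq_0:
  assumes "f absolutely_integrable_on dcube \<omega> j m"
  shows "integral UNIV (mdiff \<omega> j m f) = 0"
proof -
  have "integral UNIV (\<lambda>y. \<Sum>J\<in>dchildren \<omega> j m.
      (avg J f - avg (\<Union>(dchildren \<omega> j m)) f) * indicator J y) = 0"
    using assms lmeasurable_dchildren
    by (intro integral_avg_diff_partition_eq_0 finite_dchildren disjoint_dchildren)
      (auto simp: Union_dchildren)
  then show ?thesis
    by (simp add: mdiff_def[abs_def] Union_dchildren)
qed

text \<open>No integrability of \<open>\<phi> * g\<close> is assumed below: without it the integral is 0 by convention.\<close>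

lemma integral_mult_le_on_support:
  fixes g \<phi> :: "'a::euclidean_space \<Rightarrow> real"
  assumes g: "g absolutely_integrable_on UNIV" and "0 \<le> B"
    and bound: "\<And>y. g y \<noteq> 0 \<Longrightarrow> \<bar>\<phi> y\<bar> \<le> B"
  shows "\<bar>integral UNIV (\<lambda>y. \<phi> y * g y)\<bar> \<le> B * integral UNIV (\<lambda>y. \<bar>g y\<bar>)"
proof (cases "(\<lambda>y. \<phi> y * g y) integrable_on UNIV")
  case True
  have abs_g: "(\<lambda>y. \<bar>g y\<bar>) integrable_on UNIV"
    using g by (simp add: absolutely_integrable_on_def)
  have "norm (integral UNIV (\<lambda>y. \<phi> y * g y)) \<le> integral UNIV (\<lambda>y. B * \<bar>g y\<bar>)"
  proof (rule integral_norm_bound_integral[OF True])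
    show "(\<lambda>y. B * \<bar>g y\<bar>) integrable_on UNIV"
      using abs_g by (rule integrable_on_mult_right)
    show "norm (\<phi> y * g y) \<le> B * \<bar>g y\<bar>" for y
      using bound[of y] by (cases "g y = 0") (auto simp: abs_mult mult_right_mono)
  qed
  then show ?thesis
    by simp
next
  case False
  then show ?thesis
    using g \<open>0 \<le> B\<close>
    by (simp add: not_integrable_integral absolutely_integrable_on_def integral_nonneg)
qed

lemma integral_mult_le_cancellation:
  fixes g \<phi> :: "'a::euclidean_space \<Rightarrow> real"
  assumes g: "g absolutely_integrable_on UNIV" and g0: "integral UNIV g = 0" and "0 \<le> B"
    and bound: "\<And>y. g y \<noteq> 0 \<Longrightarrow> \<bar>\<phi> y - \<phi> c\<bar> \<le> B"
  shows "\<bar>integral UNIV (\<lambda>y. \<phi> y * g y)\<bar> \<le> B * integral UNIV (\<lambda>y. \<bar>g y\<bar>)"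
proof (cases "(\<lambda>y. \<phi> y * g y) integrable_on UNIV")
  case True
  have "(\<lambda>y. \<phi> c * g y) integrable_on UNIV"
    using g by (simp add: absolutely_integrable_on_def integrable_on_mult_right)
  then have "integral UNIV (\<lambda>y. \<phi> y * g y) = integral UNIV (\<lambda>y. (\<phi> y - \<phi> c) * g y)"
    using True g0 by (simp add: left_diff_distrib integral_diff)
  then show ?thesis
    using integral_mult_le_on_support[OF g \<open>0 \<le> B\<close> bound] by simp
next
  case False
  then show ?thesis
    using g \<open>0 \<le> B\<close>
    by (simp add: not_integrable_integral absolutely_integrable_on_def integral_nonneg)
qed

lemma setdist_inf_le: "x \<in> A \<Longrightarrow> y \<in> B \<Longrightarrow> setdist_inf A B \<le> linf (x - y)"
  unfolding setdist_inf_def by (rule cInf_lower) (auto intro: bdd_belowI[of _ 0] simp: linf_nonneg)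

lemma setdist_inf_ge:
  "A \<noteq> {} \<Longrightarrow> B \<noteq> {} \<Longrightarrow> (\<And>x y. x \<in> A \<Longrightarrow> y \<in> B \<Longrightarrow> c \<le> linf (x - y)) \<Longrightarrow> c \<le> setdist_inf A B"
  unfolding setdist_inf_def by (rule cInf_greatest) auto

lemma setdist_inf_nonneg: "A \<noteq> {} \<Longrightarrow> B \<noteq> {} \<Longrightarrow> 0 \<le> setdist_inf A B"
  by (rule setdist_inf_ge) (auto simp: linf_nonneg)

lemma setdist_inf_frontier_le:
  assumes "A \<inter> B = {}" "A \<noteq> {}" "B \<noteq> {}"
  shows "setdist_inf A (frontier B) \<le> setdist_inf A B"
proof (rule setdist_inf_ge[OF assms(2,3)])
  fix x y assume x: "x \<in> A" and y: "y \<in> B"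
  have "closed_segment x y \<inter> frontier B \<noteq> {}"
  proof (rule connected_Int_frontier)
    show "closed_segment x y \<inter> B \<noteq> {}" "closed_segment x y - B \<noteq> {}"
      using x y assms(1) by auto
  qed simp
  then obtain z where z: "z \<in> closed_segment x y" "z \<in> frontier B"
    by blast
  then obtain u where u: "0 \<le> u" "u \<le> 1" "z = (1 - u) *\<^sub>R x + u *\<^sub>R y"
    unfolding in_segment by blast
  have "linf (x - z) \<le> linf (x - y)"
  proof (rule linf_le)
    fix i
    have "(x - z) $ i = u * (x - y) $ i"
      unfolding u(3) by (simp add: algebra_simps)
    then have "\<bar>(x - z) $ i\<bar> = u * \<bar>(x - y) $ i\<bar>"
      using u(1) by (simp add: abs_mult)
    also have "\<dots> \<le> \<bar>(x - y) $ i\<bar>"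
      using u by (intro mult_left_le_one_le) auto
    also have "\<dots> \<le> linf (x - y)"
      by (rule component_le_linf)
    finally show "\<bar>(x - z) $ i\<bar> \<le> linf (x - y)" .
  qed
  then show "setdist_inf A (frontier B) \<le> linf (x - y)"
    using setdist_inf_le[OF x z(2)] by linarith
qed

lemma powr_decay_le_div:
  fixes u S E D M N \<alpha> :: real
  assumes "0 < E" "0 < D" "D \<le> M * E" "0 \<le> N" "0 \<le> u" "u \<le> S" "0 \<le> \<alpha>"
  shows "u powr \<alpha> * E powr (- N) \<le> M powr N * S powr \<alpha> / D powr N"
proof -
  have "0 < M * E"
    using assms by linarith
  then have "0 < M"
    using \<open>0 < E\<close> by (rule zero_less_mult_pos2)
  have "D powr N \<le> M powr N * E powr N"
    using assms \<open>0 < M\<close> by (simp add: powr_mono2 flip: powr_mult)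
  then have "E powr (- N) \<le> M powr N / D powr N"
    using assms by (simp add: powr_minus divide_simps mult.commute)
  moreover have "u powr \<alpha> \<le> S powr \<alpha>"
    using assms by (intro powr_mono2) auto
  ultimately have "u powr \<alpha> * E powr (- N) \<le> S powr \<alpha> * (M powr N / D powr N)"
    by (intro mult_mono) auto
  then show ?thesis
    by (simp add: mult.commute)
qed

lemma geometric_mean_decay:
  fixes lR lP E \<gamma> N \<alpha> :: real
  assumes "0 < lR" "lR \<le> lP" "0 \<le> \<gamma>" "\<gamma> \<le> 1" "0 \<le> N" "\<gamma> * N = \<alpha> / 4"
    and E: "lR powr \<gamma> * lP powr (1 - \<gamma>) \<le> E"
  shows "lR powr \<alpha> * E powr (- N) \<le> sqrt (lR * lP) powr \<alpha> * lP powr (- N)"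
proof -
  have "0 < lP" "0 \<le> \<alpha>"
    using assms by (auto intro: mult_nonneg_nonneg[of \<gamma> N, simplified])
  have "E powr (- N) \<le> (lR powr \<gamma> * lP powr (1 - \<gamma>)) powr (- N)"
    using E assms \<open>0 < lP\<close> by (intro powr_mono2') auto
  also have "\<dots> = lR powr (\<gamma> * - N) * lP powr ((1 - \<gamma>) * - N)"
    using assms \<open>0 < lP\<close> by (simp add: powr_mult powr_powr)
  also have "\<dots> = lR powr (- (\<alpha> / 4)) * lP powr (\<alpha> / 4 - N)"
    by (simp add: \<open>\<gamma> * N = \<alpha> / 4\<close>[symmetric] algebra_simps)
  finally have "lR powr \<alpha> * E powr (- N) \<le> lR powr \<alpha> * (lR powr (- (\<alpha> / 4)) * lP powr (\<alpha> / 4 - N))"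
    using assms by (intro mult_left_mono) auto
  also have "\<dots> = lR powr (\<alpha> / 2) * lR powr (\<alpha> / 4) * lP powr (\<alpha> / 4 - N)"
    using assms by (simp add: mult.assoc flip: powr_add)
  also have "\<dots> \<le> lR powr (\<alpha> / 2) * lP powr (\<alpha> / 4) * lP powr (\<alpha> / 4 - N)"
    using assms \<open>0 \<le> \<alpha>\<close> by (intro mult_right_mono mult_left_mono powr_mono2) auto
  also have "\<dots> = (lR powr (\<alpha> / 2) * lP powr (\<alpha> / 2)) * lP powr (- N)"
    using \<open>0 < lP\<close> by (simp add: mult.assoc flip: powr_add)
  also have "lR powr (\<alpha> / 2) * lP powr (\<alpha> / 2) = sqrt (lR * lP) powr \<alpha>"
    using assms \<open>0 < lP\<close> by (simp add: powr_half_sqrt[symmetric] powr_powr powr_mult)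
  finally show ?thesis .
qed

lemma le_sqrt_mult: "0 \<le> a \<Longrightarrow> a \<le> b \<Longrightarrow> a \<le> sqrt (a * b)"
  by (rule real_le_rsqrt) (simp add: power2_eq_square mult_left_mono)

lemma decay_le_small_cube:
  fixes lR lP \<delta> \<rho> t u \<alpha> N M :: real
  assumes "0 < lP" "lP \<le> lR / 2" "lR / 2 \<le> t" "0 \<le> \<delta>" "\<delta> \<le> \<rho>" "0 \<le> u" "u \<le> lP"
    "0 \<le> \<alpha>" "0 \<le> N" "4 \<le> M"
  shows "u powr \<alpha> * (t + \<rho>) powr (- N) \<le> M powr N * sqrt (lR * lP) powr \<alpha> / (lR + \<delta> + lP) powr N"
proof (rule powr_decay_le_div)
  have "lR + \<delta> + lP \<le> 4 * (t + \<rho>)"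
    using assms by argo
  also have "\<dots> \<le> M * (t + \<rho>)"
    using assms by (intro mult_right_mono) auto
  finally show "lR + \<delta> + lP \<le> M * (t + \<rho>)" .
  have "lP \<le> sqrt (lR * lP)"
    using assms le_sqrt_mult[of lP lR] by (simp add: mult.commute)
  then show "u \<le> sqrt (lR * lP)"
    using assms by linarith
qed (use assms in auto)

lemma decay_le_large_cube:
  fixes lR lP \<delta> \<rho> t \<alpha> N M :: real and r :: nat
  assumes "0 < lR" "lR \<le> lP" "lR / 2 \<le> t" "t \<le> lR" "0 \<le> \<delta>" "\<delta> \<le> \<rho>"
    "0 \<le> \<alpha>" "\<alpha> \<le> 4 * N" "0 < N" "4 * 2 ^ r \<le> M"
    and good: "2 ^ r * lR \<le> lP \<Longrightarrow> lR powr (\<alpha> / (4 * N)) * lP powr (1 - \<alpha> / (4 * N)) \<le> \<delta>"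
  shows "t powr \<alpha> * (t + \<rho>) powr (- N) \<le> M powr N * sqrt (lR * lP) powr \<alpha> / (lR + \<delta> + lP) powr N"
proof -
  let ?S = "sqrt (lR * lP)" and ?D = "lR + \<delta> + lP"
  have "0 < t + \<rho>" "0 < ?D" "1 \<le> (2::real) ^ r"
    using assms by auto
  have "4 \<le> M"
    using assms(10) \<open>1 \<le> 2 ^ r\<close> by linarith
  have "t powr \<alpha> * (t + \<rho>) powr (- N) \<le> lR powr \<alpha> * (t + \<rho>) powr (- N)"
    using assms by (intro mult_right_mono powr_mono2) auto
  also have "\<dots> \<le> M powr N * ?S powr \<alpha> / ?D powr N"
  proof (cases "2 ^ r * lR \<le> lP \<and> \<delta> < lP")
    case True
    have "lR powr \<alpha> * (t + \<rho>) powr (- N) \<le> ?S powr \<alpha> * lP powr (- N)"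
      using assms good[OF conjunct1[OF True]]
      by (intro geometric_mean_decay[where \<gamma> = "\<alpha> / (4 * N)"]) auto
    also have "\<dots> \<le> M powr N * ?S powr \<alpha> / ?D powr N"
    proof (rule powr_decay_le_div)
      have "?D \<le> 4 * lP"
        using True assms by argo
      also have "\<dots> \<le> M * lP"
        using assms \<open>4 \<le> M\<close> by (intro mult_right_mono) auto
      finally show "?D \<le> M * lP" .
    qed (use assms in auto)
    finally show ?thesis .
  next
    case False
    have "?D \<le> 4 * 2 ^ r * (t + \<rho>)"
    proof (cases "lP < 2 ^ r * lR")
      case True
      let ?p = "(2::real) ^ r"
      have "lR \<le> ?p * lR" "\<delta> \<le> ?p * \<delta>"
        using mult_right_mono[OF \<open>1 \<le> ?p\<close>, of lR] mult_right_mono[OF \<open>1 \<le> ?p\<close>, of \<delta>] assms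
        by auto
      moreover have "?p * lR \<le> 2 * (?p * t)" "?p * \<delta> \<le> ?p * \<rho>" "0 \<le> ?p * \<rho>"
        using assms by auto
      ultimately have "?D \<le> 4 * (?p * t) + 4 * (?p * \<rho>)"
        using True by argo
      then show ?thesis
        by (simp add: algebra_simps)
    next
      case False
      then have "?D \<le> 4 * (t + \<rho>)"
        using \<open>\<not> (2 ^ r * lR \<le> lP \<and> \<delta> < lP)\<close> assms by argo
      also have "\<dots> \<le> 4 * 2 ^ r * (t + \<rho>)"
        using \<open>1 \<le> 2 ^ r\<close> \<open>0 < t + \<rho>\<close> by (intro mult_right_mono) auto
      finally show ?thesis .
    qed
    also have "\<dots> \<le> M * (t + \<rho>)"
      using assms \<open>0 < t + \<rho>\<close> by (intro mult_right_mono) auto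
    finally have "?D \<le> M * (t + \<rho>)" .
    then show ?thesis
      using assms le_sqrt_mult[of lR lP] by (intro powr_decay_le_div) auto
  qed
  finally show ?thesis .
qed

lemma absolutely_integrable_on_dcube:
  assumes "\<forall>S. compact S \<longrightarrow> f absolutely_integrable_on S"
  shows "f absolutely_integrable_on dcube \<omega> j m"
  using set_integrable_subset[OF assms[rule_format, OF compact_cbox]
      fmeasurableD[OF lmeasurable_dcube] dcube_subset_cbox] .

lemma dyadic_side_less_imp_le_half:
  assumes "2 powr (- real_of_int j) < 2 powr (- real_of_int j')"
  shows "2 powr (- real_of_int j) \<le> 2 powr (- real_of_int j') / 2"
proof -
  have "j' + 1 \<le> j"
    using assms by simp
  then have "2 powr (- real_of_int j) \<le> 2 powr (- real_of_int j' - 1)"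
    by simp
  then show ?thesis
    by (simp add: powr_diff)
qed

lemma integral_kernel_mdiff_le_small_cube:
  fixes \<phi> f :: "real ^ 'n \<Rightarrow> real" and C \<alpha> M :: real and jR jP :: int
  defines "lR \<equiv> 2 powr (- real_of_int jR)" and "lP \<equiv> 2 powr (- real_of_int jP)"
    and "N \<equiv> \<alpha> + real CARD('n)"
  assumes x: "x \<in> dcube \<omega> jR mR" and t: "lR / 2 \<le> t" and smaller: "lP < lR"
    and f: "f absolutely_integrable_on dcube \<omega> jP mP"
    and smooth: "\<And>y y'. linf (y - y') < t \<Longrightarrow>
      \<bar>\<phi> y - \<phi> y'\<bar> \<le> C * linf (y - y') powr \<alpha> * (t + linf (x - y)) powr (- \<alpha> - real CARD('n))"
    and "0 \<le> C" "0 \<le> \<alpha>" "4 \<le> M"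
  shows "\<bar>integral UNIV (\<lambda>y. \<phi> y * mdiff \<omega> jP mP f y)\<bar>
    \<le> C * M powr N * sqrt (lR * lP) powr \<alpha>
        / (lR + setdist_inf (dcube \<omega> jR mR) (dcube \<omega> jP mP) + lP) powr N
      * integral UNIV (\<lambda>y. \<bar>mdiff \<omega> jP mP f y\<bar>)"
proof -
  let ?\<delta> = "setdist_inf (dcube \<omega> jR mR) (dcube \<omega> jP mP)"
  let ?c = "dcorner \<omega> jP mP"
  have "lP \<le> lR / 2"
    using smaller unfolding lR_def lP_def by (rule dyadic_side_less_imp_le_half)
  have "0 \<le> ?\<delta>"
    using x dcorner_mem_dcube by (intro setdist_inf_nonneg) auto
  have "\<bar>\<phi> y - \<phi> ?c\<bar> \<le> C * M powr N * sqrt (lR * lP) powr \<alpha> / (lR + ?\<delta> + lP) powr N"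
    if "mdiff \<omega> jP mP f y \<noteq> 0" for y
  proof -
    have y: "y \<in> dcube \<omega> jP mP"
      using that mdiff_eq_0_outside by blast
    have "linf (y - ?c) < lP"
      using linf_diff_dcorner_less[OF y] unfolding lP_def .
    then have "\<bar>\<phi> y - \<phi> ?c\<bar> \<le> C * (linf (y - ?c) powr \<alpha> * (t + linf (x - y)) powr (- N))"
      using smooth[of y ?c] \<open>lP \<le> lR / 2\<close> t by (simp add: N_def mult.assoc)
    also have "\<dots> \<le> C * (M powr N * sqrt (lR * lP) powr \<alpha> / (lR + ?\<delta> + lP) powr N)"
    proof (intro mult_left_mono decay_le_small_cube)
      show "0 < lP" "0 \<le> N"
        using \<open>0 \<le> \<alpha>\<close> by (simp_all add: lP_def N_def)
    qed (use \<open>linf (y - ?c) < lP\<close> \<open>lP \<le> lR / 2\<close> t \<open>0 \<le> ?\<delta>\<close> setdist_inf_le[OF x y]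
          \<open>0 \<le> C\<close> \<open>0 \<le> \<alpha>\<close> \<open>4 \<le> M\<close> in \<open>auto simp: linf_nonneg\<close>)
    finally show ?thesis
      by simp
  qed
  then show ?thesis
    using \<open>0 \<le> C\<close> \<open>4 \<le> M\<close> \<open>0 \<le> ?\<delta>\<close>
    by (intro integral_mult_le_cancellation[OF absolutely_integrable_mdiff integral_mdiff_eq_0[OF f]])
      (auto simp: lR_def lP_def)
qed

lemma integral_kernel_mdiff_le_large_cube:
  fixes \<phi> f :: "real ^ 'n \<Rightarrow> real" and C \<alpha> M :: real and jR jP :: int
  defines "lR \<equiv> 2 powr (- real_of_int jR)" and "lP \<equiv> 2 powr (- real_of_int jP)"
    and "N \<equiv> \<alpha> + real CARD('n)"
  assumes good: "good \<alpha> r \<omega> jR mR" and x: "x \<in> dcube \<omega> jR mR" and t: "lR / 2 \<le> t" "t \<le> lR"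
    and larger: "lR \<le> lP" and disj: "dcube \<omega> jP mP \<inter> dcube \<omega> jR mR = {}"
    and size: "\<And>y. \<bar>\<phi> y\<bar> \<le> C * t powr \<alpha> * (t + linf (x - y)) powr (- \<alpha> - real CARD('n))"
    and "0 \<le> C" "0 \<le> \<alpha>" "4 * 2 ^ r \<le> M"
  shows "\<bar>integral UNIV (\<lambda>y. \<phi> y * mdiff \<omega> jP mP f y)\<bar>
    \<le> C * M powr N * sqrt (lR * lP) powr \<alpha>
        / (lR + setdist_inf (dcube \<omega> jR mR) (dcube \<omega> jP mP) + lP) powr N
      * integral UNIV (\<lambda>y. \<bar>mdiff \<omega> jP mP f y\<bar>)"
proof -
  let ?\<delta> = "setdist_inf (dcube \<omega> jR mR) (dcube \<omega> jP mP)"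
  have nonempty: "dcube \<omega> jR mR \<noteq> {}" "dcube \<omega> jP mP \<noteq> {}"
    using x dcorner_mem_dcube by auto
  have "0 < N"
    using \<open>0 \<le> \<alpha>\<close> unfolding N_def by (simp add: add_nonneg_pos)
  have good_P: "lR powr (\<alpha> / (4 * N)) * lP powr (1 - \<alpha> / (4 * N)) \<le> ?\<delta>" if "2 ^ r * lR \<le> lP"
  proof -
    have "lR powr (\<alpha> / (4 * N)) * lP powr (1 - \<alpha> / (4 * N))
        < setdist_inf (dcube \<omega> jR mR) (frontier (dcube \<omega> jP mP))"
      using good that unfolding good_def lR_def lP_def N_def by (simp add: algebra_simps)
    also have "\<dots> \<le> ?\<delta>"
      using disj nonempty by (intro setdist_inf_frontier_le) auto
    finally show ?thesis
      by simp
  qed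
  have "\<bar>\<phi> y\<bar> \<le> C * M powr N * sqrt (lR * lP) powr \<alpha> / (lR + ?\<delta> + lP) powr N"
    if "mdiff \<omega> jP mP f y \<noteq> 0" for y
  proof -
    have y: "y \<in> dcube \<omega> jP mP"
      using that mdiff_eq_0_outside by blast
    have "\<bar>\<phi> y\<bar> \<le> C * (t powr \<alpha> * (t + linf (x - y)) powr (- N))"
      using size[of y] by (simp add: N_def mult.assoc)
    also have "\<dots> \<le> C * (M powr N * sqrt (lR * lP) powr \<alpha> / (lR + ?\<delta> + lP) powr N)"
      using \<open>0 \<le> C\<close> \<open>0 \<le> \<alpha>\<close> \<open>0 < N\<close> \<open>4 * 2 ^ r \<le> M\<close> larger t
        setdist_inf_nonneg[OF nonempty] setdist_inf_le[OF x y] good_P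
      by (intro mult_left_mono decay_le_large_cube) (auto simp: lR_def N_def)
    finally show ?thesis
      by simp
  qed
  then show ?thesis
    using \<open>0 \<le> C\<close> \<open>4 * 2 ^ r \<le> M\<close> setdist_inf_nonneg[OF nonempty]
    by (intro integral_mult_le_on_support[OF absolutely_integrable_mdiff])
      (auto simp: lR_def lP_def)
qed

lemma integral_kernel_mdiff_le:
  fixes k :: "real \<Rightarrow> real ^ 'n \<Rightarrow> real ^ 'n \<Rightarrow> real" and f :: "real ^ 'n \<Rightarrow> real"
    and C \<alpha> :: real and jR jP :: int
  defines "lR \<equiv> 2 powr (- real_of_int jR)" and "lP \<equiv> 2 powr (- real_of_int jP)"
    and "N \<equiv> \<alpha> + real CARD('n)"
  assumes size: "\<forall>t>0. \<forall>x y. \<bar>k t x y\<bar> \<le> C * t powr \<alpha> * (t + linf (x - y)) powr (- \<alpha> - real CARD('n))"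
    and smooth: "\<forall>t>0. \<forall>x y x' y'. linf (x - x') + linf (y - y') < t \<longrightarrow>
        \<bar>k t x y - k t x' y'\<bar> \<le> C * (linf (x - x') powr \<alpha> + linf (y - y') powr \<alpha>)
                                  * (t + linf (x - y)) powr (- \<alpha> - real CARD('n))"
    and good: "good \<alpha> r \<omega> jR mR"
    and sides: "(lP \<ge> lR \<and> dcube \<omega> jP mP \<inter> dcube \<omega> jR mR = {}) \<or> lP < lR"
    and f: "\<forall>S. compact S \<longrightarrow> f absolutely_integrable_on S"
    and x: "x \<in> dcube \<omega> jR mR" and t: "lR / 2 \<le> t" "t < lR"
    and "0 \<le> C" "0 \<le> \<alpha>"
  shows "\<bar>integral UNIV (\<lambda>y. k t x y * mdiff \<omega> jP mP f y)\<bar>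
    \<le> C * (4 * 2 ^ r) powr N * sqrt (lR * lP) powr \<alpha>
        / (lR + setdist_inf (dcube \<omega> jR mR) (dcube \<omega> jP mP) + lP) powr N
      * integral UNIV (\<lambda>y. \<bar>mdiff \<omega> jP mP f y\<bar>)"
proof -
  have "0 < t"
    using t(1) powr_gt_zero[of 2 "- real_of_int jR"] unfolding lR_def by linarith
  from sides show ?thesis
  proof (elim disjE conjE)
    assume "lR \<le> lP" and disj: "dcube \<omega> jP mP \<inter> dcube \<omega> jR mR = {}"
    have "\<bar>k t x y\<bar> \<le> C * t powr \<alpha> * (t + linf (x - y)) powr (- \<alpha> - real CARD('n))" for y
      using size \<open>0 < t\<close> by blast
    from integral_kernel_mdiff_le_large_cube[OF good x _ _ _ disj this]
    show ?thesis
      using \<open>lR \<le> lP\<close> t \<open>0 \<le> C\<close> \<open>0 \<le> \<alpha>\<close> unfolding lR_def lP_def N_def by simp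
  next
    assume "lP < lR"
    have "\<bar>k t x y - k t x y'\<bar>
        \<le> C * linf (y - y') powr \<alpha> * (t + linf (x - y)) powr (- \<alpha> - real CARD('n))"
      if "linf (y - y') < t" for y y'
      using smooth[rule_format, OF \<open>0 < t\<close>, of x x y y'] that by simp
    from integral_kernel_mdiff_le_small_cube[OF x _ _ absolutely_integrable_on_dcube[OF f] this]
    show ?thesis
      using \<open>lP < lR\<close> t \<open>0 \<le> C\<close> \<open>0 \<le> \<alpha>\<close> unfolding lR_def lP_def N_def by simp
  qed
qed

theorem lemma4p2:
  fixes C \<alpha> :: real and r :: nat
  assumes "C > 0" and "0 < \<alpha>" and "\<alpha> \<le> 1"
  shows "\<exists>K::real. \<forall>(k :: real \<Rightarrow> real ^ 'n \<Rightarrow> real ^ 'n \<Rightarrow> real)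
            (\<omega> :: int \<Rightarrow> 'n \<Rightarrow> bool) jP mP jR mR (f :: real ^ 'n \<Rightarrow> real) x t.
     (\<forall>t>0. \<forall>x y. \<bar>k t x y\<bar> \<le> C * t powr \<alpha> * (t + linf (x - y)) powr (- \<alpha> - real CARD('n))) \<and>
     (\<forall>t>0. \<forall>x y x' y'. linf (x - x') + linf (y - y') < t \<longrightarrow>
        \<bar>k t x y - k t x' y'\<bar> \<le> C * (linf (x - x') powr \<alpha> + linf (y - y') powr \<alpha>)
                                  * (t + linf (x - y)) powr (- \<alpha> - real CARD('n))) \<and>
     good \<alpha> r \<omega> jR mR \<and>
     ((2 powr (- real_of_int jP) \<ge> 2 powr (- real_of_int jR) \<and> dcube \<omega> jP mP \<inter> dcube \<omega> jR mR = {})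
       \<or> 2 powr (- real_of_int jP) < 2 powr (- real_of_int jR)) \<and>
     (\<forall>S. compact S \<longrightarrow> f absolutely_integrable_on S) \<and>
     x \<in> dcube \<omega> jR mR \<and> 2 powr (- real_of_int jR) / 2 \<le> t \<and> t < 2 powr (- real_of_int jR)
     \<longrightarrow> \<bar>integral UNIV (\<lambda>y. k t x y * mdiff \<omega> jP mP f y)\<bar>
         \<le> K * (sqrt (2 powr (- real_of_int jR) * 2 powr (- real_of_int jP))) powr \<alpha>
             / (2 powr (- real_of_int jR) + setdist_inf (dcube \<omega> jR mR) (dcube \<omega> jP mP)
                + 2 powr (- real_of_int jP)) powr (\<alpha> + real CARD('n))
             * integral UNIV (\<lambda>y. \<bar>mdiff \<omega> jP mP f y\<bar>)"
  using assms
  by (intro exI[of _ "C * (4 * 2 ^ r) powr (\<alpha> + real CARD('n))"] allI impI, elim conjE)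
    (rule integral_kernel_mdiff_le; simp)

end
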